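(* Let $f^-(x)=x$ and let $f^+:[0,1]\to[0,1]$ satisfy $f^+(x)\le 2x$ for all $x\in[0,1]$. Then for all $x,y,z\in[0,1]$, writing $q=f^+(x)$, \[ ALG=y(1-z)+z(1-y)+(1-q)(1-z)+(1-q)(1-y),\qquad LP=x(1-yz)+(1-y)(1-qz)+(1-z)(1-qy), \] we have $2\,LP\ge ALG$; that is, $2LP(uvw)\ge ALG(uvw)$ for every $(+,-,-)$-triangle.
   Context: For a triangle $uvw$ with one positive edge of length $x$ and two negative edges of lengths $y,z$ (all in $[0,1]$), with cut probabilities $f^+(x)$ for the positive edge and $f^-(y),f^-(z)$ for the negative edges, the per-triangle quantities of the pivot rounding algorithm are $ALG=f^-(y)(1-f^-(z))+f^-(z)(1-f^-(y))+(1-f^+(x))(1-f^-(z))+(1-f^+(x))(1-f^-(y))$ and $LP=x(1-f^-(y)f^-(z))+(1-y)(1-f^+(x)f^-(z))+(1-z)(1-f^+(x)f^-(y))$; with $f^-(t)=t$ these are the expressions in the claim. *)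

theory Defs
  imports Main "HOL.Real"
begin

text \<open>Per-triangle quantities of the pivot rounding algorithm for a (+,-,-) triangle
with positive edge length x and negative edge lengths y, z.\<close>

definition ALG :: "(real \<Rightarrow> real) \<Rightarrow> (real \<Rightarrow> real) \<Rightarrow> real \<Rightarrow> real \<Rightarrow> real \<Rightarrow> real" where
  "ALG fp fm x y z =
     fm y * (1 - fm z) + fm z * (1 - fm y) + (1 - fp x) * (1 - fm z) + (1 - fp x) * (1 - fm y)"

definition LP :: "(real \<Rightarrow> real) \<Rightarrow> (real \<Rightarrow> real) \<Rightarrow> real \<Rightarrow> real \<Rightarrow> real \<Rightarrow> real" where
  "LP fp fm x y z =
     x * (1 - fm y * fm z) + (1 - y) * (1 - fp x * fm z) + (1 - z) * (1 - fp x * fm y)"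

end

theory Submission
  imports Defs
begin

text \<open>With \<open>q = f\<^sup>+(x)\<close> the gap \<open>2 LP - ALG\<close> factors as
  \<open>(2x - q)(1 - yz) + (2 + 3q)(1 - y)(1 - z)\<close>, and both terms are nonnegative
  because \<open>q \<le> 2x\<close>, \<open>q \<ge> 0\<close> and \<open>y, z \<in> [0,1]\<close>.\<close>

lemma triangle_gap_eq:
  fixes q x y z :: real
  shows "2 * (x * (1 - y * z) + (1 - y) * (1 - q * z) + (1 - z) * (1 - q * y))
      - (y * (1 - z) + z * (1 - y) + (1 - q) * (1 - z) + (1 - q) * (1 - y))
    = (2 * x - q) * (1 - y * z) + (2 + 3 * q) * ((1 - y) * (1 - z))"
  by (simp add: algebra_simps)

lemma triangle_gap_nonneg:
  fixes q x y z :: real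
  assumes "0 \<le> q" "q \<le> 2 * x" "0 \<le> y" "y \<le> 1" "0 \<le> z" "z \<le> 1"
  shows "y * (1 - z) + z * (1 - y) + (1 - q) * (1 - z) + (1 - q) * (1 - y)
    \<le> 2 * (x * (1 - y * z) + (1 - y) * (1 - q * z) + (1 - z) * (1 - q * y))"
proof -
  have "y * z \<le> 1"
    using assms by (simp add: mult_le_one)
  then have "0 \<le> (2 * x - q) * (1 - y * z)"
    using assms by simp
  moreover have "0 \<le> (2 + 3 * q) * ((1 - y) * (1 - z))"
    using assms by simp
  ultimately show ?thesis
    using triangle_gap_eq[of x y z q] by linarith
qed

theorem lemma10:
  fixes fp fm :: "real \<Rightarrow> real"
  assumes fm_def: "\<forall>t. fm t = t"
    and fp_range: "\<forall>t\<in>{0..1}. fp t \<in> {0..1}"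
    and fp_bound: "\<forall>t\<in>{0..1}. fp t \<le> 2 * t"
    and x: "x \<in> {0..1}" and y: "y \<in> {0..1}" and z: "z \<in> {0..1}"
  shows "2 * LP fp fm x y z \<ge> ALG fp fm x y z"
proof -
  have "0 \<le> fp x" "fp x \<le> 2 * x"
    using fp_range fp_bound x by auto
  then show ?thesis
    using triangle_gap_nonneg[of "fp x" x y z] y z fm_def
    unfolding LP_def ALG_def by auto
qed

end
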